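(* Let $Q$ be a convex $k$-gon in $\mathbb{R}^2$ with vertices $v_0,\dots,v_{k-1}$ and the origin in its interior. Let $\Theta\subset\mathbb{S}^1$ be the set of directions of the vectors $v_j-v_i$, $i\neq j$, and let $\mathcal{I}$ be the collection of open arcs into which $\Theta$ partitions the unit circle $\mathbb{S}^1$. Then for all ordered pairs of distinct points $(p,q)$ in the plane such that the direction of $\vec{pq}$ lies in the same arc of $\mathcal{I}$, the sequence of edgelet labels along the bisector $b_{pq}$ (traced so that $p$ lies on its left side and $q$ on its right side) is the same.
   Context: A homothetic placement of $Q$ is $x+\lambda Q$ with center $x$ and $\lambda>0$; its edges are identified with the edges $e_0,\dots,e_{k-1}$ of $Q$. $d_Q(x,y)=\min\{\lambda\ge0: y\in x+\lambda Q\}$, and the bisector $b_{pq}=\{x: d_Q(x,p)=d_Q(x,q)\}$, i.e. the locus of centers of placements whose boundary contains $p$ and $q$. An edgelet of $b_{pq}$ with label $(e_i,e_j)$ is a maximal segment of $b_{pq}$ consisting of centers of placements in which $p$ lies in the relative interior of edge $e_i$ and $q$ in the relative interior of edge $e_j$; the bisector is the concatenation of its edgelets. *)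

theory Defs
  imports "HOL-Analysis.Analysis"
begin

definition cross2 :: "real^2 \<Rightarrow> real^2 \<Rightarrow> real" where
  "cross2 a b = a$1 * b$2 - a$2 * b$1"

text \<open>Strictly convex position in cyclic order: for every edge, all other vertices lie
  strictly on the same side of its supporting line (the same side for all edges).\<close>
definition convex_kgon :: "nat \<Rightarrow> (nat \<Rightarrow> real^2) \<Rightarrow> bool" where
  "convex_kgon k v \<longleftrightarrow> 3 \<le> k \<and>
     ((\<forall>i<k. \<forall>j<k. j \<noteq> i \<and> j \<noteq> Suc i mod k \<longrightarrow>
          0 < cross2 (v (Suc i mod k) - v i) (v j - v i)) \<or>
      (\<forall>i<k. \<forall>j<k. j \<noteq> i \<and> j \<noteq> Suc i mod k \<longrightarrow>
          cross2 (v (Suc i mod k) - v i) (v j - v i) < 0))"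

definition polygon :: "nat \<Rightarrow> (nat \<Rightarrow> real^2) \<Rightarrow> (real^2) set" where
  "polygon k v = convex hull (v ` {..<k})"

definition edge :: "nat \<Rightarrow> (nat \<Rightarrow> real^2) \<Rightarrow> nat \<Rightarrow> (real^2) set" where
  "edge k v i = closed_segment (v i) (v (Suc i mod k))"

definition placement :: "(real^2) set \<Rightarrow> real^2 \<Rightarrow> real \<Rightarrow> (real^2) set" where
  "placement S x r = (\<lambda>z. x + r *\<^sub>R z) ` S"

definition dQ :: "(real^2) set \<Rightarrow> real^2 \<Rightarrow> real^2 \<Rightarrow> real" where
  "dQ Q x y = Inf {r. 0 \<le> r \<and> y \<in> placement Q x r}"

definition bisector :: "(real^2) set \<Rightarrow> real^2 \<Rightarrow> real^2 \<Rightarrow> (real^2) set" where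
  "bisector Q p q = {x. dQ Q x p = dQ Q x q}"

definition has_label :: "nat \<Rightarrow> (nat \<Rightarrow> real^2) \<Rightarrow> real^2 \<Rightarrow> real^2 \<Rightarrow> real^2 \<Rightarrow> nat \<times> nat \<Rightarrow> bool" where
  "has_label k v p q x l \<longleftrightarrow> fst l < k \<and> snd l < k \<and> x \<in> bisector (polygon k v) p q \<and>
     p \<in> rel_interior (placement (edge k v (fst l)) x (dQ (polygon k v) x p)) \<and>
     q \<in> rel_interior (placement (edge k v (snd l)) x (dQ (polygon k v) x q))"

definition edgelet :: "nat \<Rightarrow> (nat \<Rightarrow> real^2) \<Rightarrow> real^2 \<Rightarrow> real^2 \<Rightarrow> (real^2) set \<Rightarrow> nat \<times> nat \<Rightarrow> bool" where
  "edgelet k v p q E l \<longleftrightarrow> E \<noteq> {} \<and> convex E \<and> E \<subseteq> {x. has_label k v p q x l} \<and>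
     (\<forall>F. convex F \<and> E \<subseteq> F \<and> F \<subseteq> {x. has_label k v p q x l} \<longrightarrow> F = E)"

text \<open>Left normal of u (u rotated by +90 degrees). Walking along the bisector in direction
  left_normal (q - p) keeps p on the left and q on the right.\<close>
definition left_normal :: "real^2 \<Rightarrow> real^2" where
  "left_normal u = (\<chi> i. if i = 1 then - (u$2) else u$1)"

definition edgelet_label_sequence ::
    "nat \<Rightarrow> (nat \<Rightarrow> real^2) \<Rightarrow> real^2 \<Rightarrow> real^2 \<Rightarrow> (nat \<times> nat) list \<Rightarrow> bool" where
  "edgelet_label_sequence k v p q L \<longleftrightarrow>
     (\<exists>Es. set Es = {(E, l). edgelet k v p q E l} \<and>
        sorted_wrt (\<lambda>a b. \<forall>x\<in>fst a. \<forall>y\<in>fst b.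
              x \<bullet> left_normal (q - p) < y \<bullet> left_normal (q - p)) Es \<and>
        L = map snd Es)"

definition directions :: "nat \<Rightarrow> (nat \<Rightarrow> real^2) \<Rightarrow> (real^2) set" where
  "directions k v = {sgn (v j - v i) | i j. i < k \<and> j < k \<and> i \<noteq> j}"

end

theory Submission
  imports Defs
begin

text \<open>A center x carries the label (i, j) exactly when x + \<rho>Q has p and q in the relative
  interiors of its edges i and j, i.e. when (q - p)/\<rho> is a chord of Q from edge i to edge j.
  For a direction w = q - p parallel to no vertex difference, such chords exist iff lines parallel
  to w enter Q through edge i and leave it through edge j and the ranges of the two edges along
  the normal n of w overlap; the label sets are convex, hence they are the edgelets.
  A center lies at level p \<bullet> n - c/m along the bisector, where c is the level and m the length of
  its chord; as Q is convex with 0 in its interior, c/m increases strictly with c, so the edgelets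
  appear in the order of the level ranges of their chords. All of this depends only on the order
  of the vertices along n, which does not change while w/|w| stays in one arc.\<close>

section \<open>Plane geometry\<close>

lemma inner_vec2: "(x::real^2) \<bullet> y = x$1 * y$1 + x$2 * y$2"
  by (simp add: inner_vec_def sum_2)

lemma vec2_eq_iff: "(x::real^2) = y \<longleftrightarrow> x$1 = y$1 \<and> x$2 = y$2"
  by (simp add: vec_eq_iff forall_2)

lemma left_normal_nth [simp]: "left_normal u $ 1 = - (u$2)" "left_normal u $ 2 = u$1"
  by (simp_all add: left_normal_def)

lemma cross2_eq_inner_left_normal: "cross2 a b = left_normal a \<bullet> b"
  by (simp add: cross2_def inner_vec2)

lemma inner_left_normal_self [simp]: "w \<bullet> left_normal w = 0"
  by (simp add: inner_vec2 algebra_simps)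

lemma cross2_scaleR_right: "cross2 a (r *\<^sub>R b) = r * cross2 a b"
  by (simp add: cross2_def algebra_simps)

lemma orthogonal_left_normal_imp_parallel:
  fixes a w :: "real^2"
  assumes "w \<noteq> 0" "a \<bullet> left_normal w = 0"
  obtains s where "a = s *\<^sub>R w"
proof
  have "(w \<bullet> w) *\<^sub>R a = (a \<bullet> w) *\<^sub>R w"
    using assms(2) by (simp add: vec2_eq_iff inner_vec2 algebra_simps)
  then have "inverse (w \<bullet> w) *\<^sub>R ((w \<bullet> w) *\<^sub>R a) = inverse (w \<bullet> w) *\<^sub>R ((a \<bullet> w) *\<^sub>R w)"
    by simp
  then show "a = (inverse (w \<bullet> w) * (a \<bullet> w)) *\<^sub>R w"
    using assms(1) by simp
qed

lemma image_affine_closed_segment: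
  fixes a b x :: "'a::real_vector"
  shows "(\<lambda>z. x + r *\<^sub>R z) ` closed_segment a b = closed_segment (x + r *\<^sub>R a) (x + r *\<^sub>R b)"
proof -
  have "(\<lambda>z. x + r *\<^sub>R z) ` closed_segment a b = (\<lambda>z. x + z) ` ((\<lambda>z. r *\<^sub>R z) ` closed_segment a b)"
    by (simp add: image_image)
  then show ?thesis
    by (simp add: closed_segment_translation closed_segment_linear_image[symmetric])
qed

lemma image_affine_open_segment:
  fixes a b x :: "'a::real_vector"
  assumes "r \<noteq> 0"
  shows "(\<lambda>z. x + r *\<^sub>R z) ` open_segment a b = open_segment (x + r *\<^sub>R a) (x + r *\<^sub>R b)"
proof -
  have "(\<lambda>z. x + r *\<^sub>R z) ` open_segment a b = (\<lambda>z. x + z) ` ((\<lambda>z. r *\<^sub>R z) ` open_segment a b)"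
    by (simp add: image_image)
  moreover have "inj (\<lambda>z::'a. r *\<^sub>R z)" using assms by (simp add: inj_on_def)
  ultimately show ?thesis
    by (simp add: open_segment_translation open_segment_linear_image[symmetric])
qed

lemma inner_image_open_segment:
  fixes a b n :: "'a::real_inner"
  assumes "a \<bullet> n \<noteq> b \<bullet> n"
  shows "(\<lambda>y. y \<bullet> n) ` open_segment a b = {min (a \<bullet> n) (b \<bullet> n) <..< max (a \<bullet> n) (b \<bullet> n)}"
proof -
  have "(\<lambda>y. y \<bullet> n) ` open_segment a b = open_segment (a \<bullet> n) (b \<bullet> n)"
  proof
    show "(\<lambda>y. y \<bullet> n) ` open_segment a b \<subseteq> open_segment (a \<bullet> n) (b \<bullet> n)"
      using assms by (auto simp: in_segment inner_add_left) blast
    show "open_segment (a \<bullet> n) (b \<bullet> n) \<subseteq> (\<lambda>y. y \<bullet> n) ` open_segment a b"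
    proof
      fix c assume "c \<in> open_segment (a \<bullet> n) (b \<bullet> n)"
      then obtain u where u: "0 < u" "u < 1" "c = (1 - u) * (a \<bullet> n) + u * (b \<bullet> n)"
        by (auto simp: in_segment)
      then have "(1 - u) *\<^sub>R a + u *\<^sub>R b \<in> open_segment a b" "c = ((1 - u) *\<^sub>R a + u *\<^sub>R b) \<bullet> n"
        using assms by (auto simp: in_segment inner_add_left)
      then show "c \<in> (\<lambda>y. y \<bullet> n) ` open_segment a b" by blast
    qed
  qed
  then show ?thesis
    by (simp add: open_segment_eq_real_ivl min_def max_def)
qed

lemma placement_iff: "p \<in> placement S x r \<longleftrightarrow> (\<exists>z\<in>S. p = x + r *\<^sub>R z)"
  by (auto simp: placement_def)

section \<open>Convex polygons and their homothets\<close>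

text \<open>\<sigma> = \<plusminus>1 records the orientation of the vertex list, so that the polygon lies on the
  nonnegative side of every edge height.\<close>

locale convex_polygon =
  fixes k :: nat and v :: "nat \<Rightarrow> real^2" and \<sigma> :: real
  assumes three_le_k: "3 \<le> k"
    and orientation: "\<sigma> = 1 \<or> \<sigma> = -1"
    and strictly_convex: "\<forall>i<k. \<forall>j<k. j \<noteq> i \<and> j \<noteq> Suc i mod k \<longrightarrow>
          0 < \<sigma> * cross2 (v (Suc i mod k) - v i) (v j - v i)"
    and origin_interior: "0 \<in> interior (polygon k v)"
begin

abbreviation "Q \<equiv> polygon k v"

definition nxt :: "nat \<Rightarrow> nat" where "nxt i = Suc i mod k"
definition side :: "nat \<Rightarrow> real^2" where "side i = v (nxt i) - v i"
definition height :: "nat \<Rightarrow> real^2 \<Rightarrow> real" where "height i z = \<sigma> * cross2 (side i) (z - v i)"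
definition open_edge :: "nat \<Rightarrow> (real^2) set" where "open_edge i = open_segment (v i) (v (nxt i))"

lemma nxt_eq: "i < k \<Longrightarrow> nxt i = (if Suc i = k then 0 else Suc i)"
  by (auto simp: nxt_def)

lemma nxt_less: "i < k \<Longrightarrow> nxt i < k"
  using three_le_k by (simp add: nxt_def)

lemma nxt_neq: "i < k \<Longrightarrow> nxt i \<noteq> i"
  using three_le_k by (auto simp: nxt_eq)

lemma nxt_nxt_neq: "i < k \<Longrightarrow> nxt (nxt i) \<noteq> i"
  using three_le_k by (auto simp: nxt_eq nxt_less split: if_splits)

lemma nxt_inj: "i < k \<Longrightarrow> j < k \<Longrightarrow> nxt i = nxt j \<Longrightarrow> i = j"
  using three_le_k by (auto simp: nxt_eq split: if_splits)

lemma height_shift: "height i z = height i y + \<sigma> * cross2 (side i) (z - y)"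
  by (simp add: height_def cross2_def algebra_simps)

lemma height_convex_comb: "height i ((1 - t) *\<^sub>R a + t *\<^sub>R b) = (1 - t) * height i a + t * height i b"
  by (simp add: height_def cross2_def algebra_simps)

lemma height_scaleR: "height i (s *\<^sub>R y) = s * height i y + (1 - s) * height i 0"
  by (simp add: height_def cross2_def algebra_simps)

lemma height_endpoints: "height i (v i) = 0" "height i (v (nxt i)) = 0"
  by (simp_all add: height_def side_def cross2_def)

lemma height_vertex_pos: "i < k \<Longrightarrow> j < k \<Longrightarrow> j \<noteq> i \<Longrightarrow> j \<noteq> nxt i \<Longrightarrow> 0 < height i (v j)"
  using strictly_convex by (simp add: height_def side_def nxt_def)

lemma height_vertex_nonneg: "i < k \<Longrightarrow> j < k \<Longrightarrow> 0 \<le> height i (v j)"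
  using height_vertex_pos[of i j] height_endpoints[of i] by (cases "j = i \<or> j = nxt i") auto

lemma side_nonzero: "i < k \<Longrightarrow> side i \<noteq> 0"
proof
  assume i: "i < k" and "side i = 0"
  then have "height i z = 0" for z by (simp add: height_def cross2_def)
  moreover have "0 < height i (v (nxt (nxt i)))"
    using height_vertex_pos[of i "nxt (nxt i)"] i nxt_less nxt_nxt_neq nxt_inj nxt_neq by metis
  ultimately show False by simp
qed

lemma vertex_inj: "a < k \<Longrightarrow> b < k \<Longrightarrow> a \<noteq> b \<Longrightarrow> v a \<noteq> v b"
proof (cases "b = nxt a")
  case True
  then show "a < k \<Longrightarrow> v a \<noteq> v b" using side_nonzero[of a] by (auto simp: side_def)
next
  case False
  then show "a < k \<Longrightarrow> b < k \<Longrightarrow> a \<noteq> b \<Longrightarrow> v a \<noteq> v b"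
    using height_vertex_pos[of a b] height_endpoints(1)[of a] by auto
qed

lemma convex_Q: "convex Q"
  by (simp add: polygon_def)

lemma vertex_in_Q: "i < k \<Longrightarrow> v i \<in> Q"
  by (simp add: polygon_def hull_inc)

lemma closed_edge_subset_Q: "i < k \<Longrightarrow> closed_segment (v i) (v (nxt i)) \<subseteq> Q"
  using closed_segment_subset[OF vertex_in_Q vertex_in_Q convex_Q] nxt_less by blast

lemma open_edge_subset_Q: "i < k \<Longrightarrow> open_edge i \<subseteq> Q"
  using closed_edge_subset_Q segment_open_subset_closed unfolding open_edge_def by blast

lemma height_nonneg: assumes "i < k" "z \<in> Q" shows "0 \<le> height i z"
proof -
  have halfplane: "{z. 0 \<le> height i z} = {z. (\<sigma> *\<^sub>R left_normal (side i)) \<bullet> z \<ge> (\<sigma> *\<^sub>R left_normal (side i)) \<bullet> v i}"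
    by (auto simp: height_def cross2_eq_inner_left_normal inner_diff_right right_diff_distrib)
  have "convex {z. 0 \<le> height i z}" unfolding halfplane by (rule convex_halfspace_ge)
  moreover have "v ` {..<k} \<subseteq> {z. 0 \<le> height i z}" using height_vertex_nonneg assms(1) by auto
  ultimately have "Q \<subseteq> {z. 0 \<le> height i z}" unfolding polygon_def by (rule hull_minimal[rotated])
  then show ?thesis using assms by auto
qed

lemma height_closed_edge: "y \<in> closed_segment (v i) (v (nxt i)) \<Longrightarrow> height i y = 0"
  by (auto simp: in_segment height_convex_comb height_endpoints)

lemma height_open_edge: "y \<in> open_edge i \<Longrightarrow> height i y = 0"
  using height_closed_edge segment_open_subset_closed unfolding open_edge_def by blast

lemma height_other_open_edge_pos:
  assumes "i < k" "j < k" "j \<noteq> i" "z \<in> open_edge j" shows "0 < height i z"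
proof -
  obtain t where t: "0 < t" "t < 1" "z = (1 - t) *\<^sub>R v j + t *\<^sub>R v (nxt j)"
    using assms(4) by (auto simp: open_edge_def in_segment)
  have hz: "height i z = (1 - t) * height i (v j) + t * height i (v (nxt j))"
    using t(3) height_convex_comb by simp
  have "0 \<le> height i (v j)" "0 \<le> height i (v (nxt j))"
    using height_vertex_nonneg assms(1,2) nxt_less by auto
  moreover have "0 < height i (v j) \<or> 0 < height i (v (nxt j))"
  proof (cases "j = nxt i")
    case True
    then have "nxt j \<noteq> i" "nxt j \<noteq> nxt i"
      using nxt_nxt_neq[OF assms(1)] nxt_inj[OF assms(2,1)] assms(3) by auto
    then show ?thesis using height_vertex_pos[OF assms(1) nxt_less[OF assms(2)]] by blast
  next
    case False
    then show ?thesis using height_vertex_pos[OF assms(1,2,3)] by blast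
  qed
  ultimately show ?thesis
    using hz t by (auto simp: add_pos_nonneg add_nonneg_pos)
qed

lemma ball_subset_Q: obtains \<epsilon> where "\<epsilon> > 0" "ball 0 \<epsilon> \<subseteq> Q"
  using origin_interior mem_interior by blast

lemma height_origin_pos: assumes "i < k" shows "0 < height i 0"
proof -
  obtain \<epsilon> where \<epsilon>: "\<epsilon> > 0" "ball 0 \<epsilon> \<subseteq> Q" by (rule ball_subset_Q)
  define s where "s = side i"
  have s: "norm s > 0" using side_nonzero assms by (simp add: s_def)
  define z where "z = (- (\<sigma> * \<epsilon> / (2 * norm s))) *\<^sub>R left_normal s"
  have "norm (left_normal s) = norm s"
    by (simp add: norm_eq_sqrt_inner inner_vec2 algebra_simps)
  moreover have "\<bar>\<sigma>\<bar> = 1" using orientation by auto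
  ultimately have "norm z = \<epsilon> / 2" using s \<epsilon>(1) by (simp add: z_def abs_mult)
  then have "0 \<le> height i z" using \<epsilon> height_nonneg assms by (simp add: subset_iff)
  moreover have "left_normal s \<bullet> left_normal s = norm s * norm s"
    by (simp add: norm_eq_sqrt_inner inner_vec2 power2_eq_square[symmetric])
  then have "\<sigma> * cross2 s z = - (\<sigma> * \<sigma>) * (\<epsilon> / 2) * norm s"
    using s by (simp add: z_def cross2_eq_inner_left_normal field_simps)
  then have "height i z = height i 0 - (\<epsilon> / 2) * norm s"
    using height_shift[of i z 0] orientation by (auto simp: s_def)
  moreover have "0 < (\<epsilon> / 2) * norm s" using \<epsilon> s by simp
  ultimately show ?thesis by linarith
qed

text \<open>The line of edge i separates x + \<rho> y from every smaller homothet of Q centered at x.\<close>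
lemma dQ_closed_edge:
  assumes "i < k" "\<rho> > 0" "y \<in> closed_segment (v i) (v (nxt i))"
  shows "dQ Q x (x + \<rho> *\<^sub>R y) = \<rho>"
  unfolding dQ_def
proof (rule cInf_eq_minimum)
  show "\<rho> \<in> {r. 0 \<le> r \<and> x + \<rho> *\<^sub>R y \<in> placement Q x r}"
    using assms closed_edge_subset_Q by (auto simp: placement_iff)
  fix r assume "r \<in> {r. 0 \<le> r \<and> x + \<rho> *\<^sub>R y \<in> placement Q x r}"
  then obtain z where z: "0 \<le> r" "z \<in> Q" "\<rho> *\<^sub>R y = r *\<^sub>R z" by (auto simp: placement_iff)
  have hy: "height i y = 0" using height_closed_edge assms by simp
  have h0: "0 < height i 0" using height_origin_pos assms by simp
  show "\<rho> \<le> r"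
  proof (rule ccontr)
    assume "\<not> \<rho> \<le> r"
    have "r \<noteq> 0"
    proof
      assume "r = 0"
      then have "y = 0" using z(3) assms(2) by simp
      then show False using hy h0 by simp
    qed
    then have "z = inverse r *\<^sub>R (\<rho> *\<^sub>R y)" using z(3) by simp
    then have "z = (\<rho> / r) *\<^sub>R y" by (simp add: divide_inverse mult.commute)
    then have "height i z = (1 - \<rho> / r) * height i 0" using height_scaleR hy by simp
    moreover have "1 - \<rho> / r < 0" using \<open>\<not> \<rho> \<le> r\<close> z(1) \<open>r \<noteq> 0\<close> by (simp add: field_simps)
    ultimately have "height i z < 0" using h0 by (simp add: mult_neg_pos)
    then show False using height_nonneg assms z by fastforce
  qed
qed

lemma dQ_nonneg: "0 \<le> dQ Q x p"
  unfolding dQ_def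
proof (rule cInf_greatest)
  obtain \<epsilon> where \<epsilon>: "\<epsilon> > 0" "ball 0 \<epsilon> \<subseteq> Q" by (rule ball_subset_Q)
  define r where "r = 2 * norm (p - x) / \<epsilon> + 1"
  have r: "r > 0" using \<epsilon> by (simp add: r_def add_nonneg_pos)
  have "\<epsilon> * r = 2 * norm (p - x) + \<epsilon>" using \<epsilon> by (simp add: r_def field_simps)
  then have "norm (p - x) < \<epsilon> * r" using \<epsilon> norm_ge_zero[of "p - x"] by linarith
  then have "norm ((1 / r) *\<^sub>R (p - x)) < \<epsilon>" using r by (simp add: pos_divide_less_eq)
  then have "(1 / r) *\<^sub>R (p - x) \<in> Q" using \<epsilon> by (auto simp: subset_iff)
  moreover have "p = x + r *\<^sub>R ((1 / r) *\<^sub>R (p - x))" using r by simp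
  ultimately have "p \<in> placement Q x r" unfolding placement_iff by blast
  then have "r \<in> {r. 0 \<le> r \<and> p \<in> placement Q x r}" using r by simp
  then show "{r. 0 \<le> r \<and> p \<in> placement Q x r} \<noteq> {}" by blast
qed auto

lemma rel_interior_placement_edge:
  assumes "i < k" "r > 0"
  shows "rel_interior (placement (edge k v i) x r) = (\<lambda>z. x + r *\<^sub>R z) ` open_edge i"
proof -
  have ne: "x + r *\<^sub>R v i \<noteq> x + r *\<^sub>R v (nxt i)"
    using vertex_inj[OF assms(1) nxt_less nxt_neq[symmetric]] assms by simp
  have "placement (edge k v i) x r = closed_segment (x + r *\<^sub>R v i) (x + r *\<^sub>R v (nxt i))"
    unfolding placement_def edge_def nxt_def[symmetric] by (rule image_affine_closed_segment)
  then show ?thesis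
    using ne assms(2) by (simp add: rel_interior_closed_segment open_edge_def image_affine_open_segment)
qed

lemma has_label_iff:
  assumes "p \<noteq> q"
  shows "has_label k v p q x (i, j) \<longleftrightarrow> i < k \<and> j < k \<and>
     (\<exists>\<rho>>0. \<exists>y\<in>open_edge i. \<exists>z\<in>open_edge j. p = x + \<rho> *\<^sub>R y \<and> q = x + \<rho> *\<^sub>R z)"
proof
  assume h: "has_label k v p q x (i, j)"
  define \<rho> where "\<rho> = dQ Q x p"
  have ij: "i < k" "j < k" using h by (auto simp: has_label_def)
  have hp: "p \<in> rel_interior (placement (edge k v i) x \<rho>)"
    and hq: "q \<in> rel_interior (placement (edge k v j) x \<rho>)"
    using h by (auto simp: has_label_def \<rho>_def bisector_def)
  have "\<rho> \<noteq> 0"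
  proof
    assume "\<rho> = 0"
    then have "placement (edge k v i) x \<rho> = {x}" "placement (edge k v j) x \<rho> = {x}"
      by (auto simp: placement_def edge_def)
    then show False using hp hq assms by simp
  qed
  then have \<rho>: "\<rho> > 0" using dQ_nonneg[of x p] by (simp add: \<rho>_def)
  obtain y where "y \<in> open_edge i" "p = x + \<rho> *\<^sub>R y"
    using hp rel_interior_placement_edge[OF ij(1) \<rho>] by blast
  moreover obtain z where "z \<in> open_edge j" "q = x + \<rho> *\<^sub>R z"
    using hq rel_interior_placement_edge[OF ij(2) \<rho>] by blast
  ultimately show "i < k \<and> j < k \<and>
     (\<exists>\<rho>>0. \<exists>y\<in>open_edge i. \<exists>z\<in>open_edge j. p = x + \<rho> *\<^sub>R y \<and> q = x + \<rho> *\<^sub>R z)"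
    using ij \<rho> by blast
next
  assume "i < k \<and> j < k \<and>
     (\<exists>\<rho>>0. \<exists>y\<in>open_edge i. \<exists>z\<in>open_edge j. p = x + \<rho> *\<^sub>R y \<and> q = x + \<rho> *\<^sub>R z)"
  then obtain \<rho> y z where h: "i < k" "j < k" "\<rho> > 0" "y \<in> open_edge i" "z \<in> open_edge j"
    "p = x + \<rho> *\<^sub>R y" "q = x + \<rho> *\<^sub>R z" by blast
  have "dQ Q x p = \<rho>" "dQ Q x q = \<rho>"
    using dQ_closed_edge h segment_open_subset_closed unfolding open_edge_def by blast+
  moreover have "p \<in> rel_interior (placement (edge k v i) x \<rho>)"
    "q \<in> rel_interior (placement (edge k v j) x \<rho>)"
    using rel_interior_placement_edge h by auto
  ultimately show "has_label k v p q x (i, j)"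
    using h(1,2) by (simp add: has_label_def bisector_def)
qed

lemma convex_label_set:
  assumes "p \<noteq> q"
  shows "convex {x. has_label k v p q x l}"
proof (rule convexI)
  obtain i j where l: "l = (i, j)" by (cases l)
  fix x1 x2 :: "real^2" and u1 u2 :: real
  assume "x1 \<in> {x. has_label k v p q x l}" "x2 \<in> {x. has_label k v p q x l}"
    and u: "0 \<le> u1" "0 \<le> u2" "u1 + u2 = 1"
  then obtain \<rho>1 y1 z1 \<rho>2 y2 z2 where ij: "i < k" "j < k"
    and h1: "\<rho>1 > 0" "y1 \<in> open_edge i" "z1 \<in> open_edge j" "p = x1 + \<rho>1 *\<^sub>R y1" "q = x1 + \<rho>1 *\<^sub>R z1"
    and h2: "\<rho>2 > 0" "y2 \<in> open_edge i" "z2 \<in> open_edge j" "p = x2 + \<rho>2 *\<^sub>R y2" "q = x2 + \<rho>2 *\<^sub>R z2"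
    using has_label_iff[OF assms] l by auto
  define \<rho> where "\<rho> = u1 * \<rho>1 + u2 * \<rho>2"
  have \<rho>: "\<rho> > 0"
    using u h1(1) h2(1) by (cases "u1 = 0") (auto simp: \<rho>_def add_pos_nonneg)
  define y where "y = (u1 * \<rho>1 / \<rho>) *\<^sub>R y1 + (u2 * \<rho>2 / \<rho>) *\<^sub>R y2"
  define z where "z = (u1 * \<rho>1 / \<rho>) *\<^sub>R z1 + (u2 * \<rho>2 / \<rho>) *\<^sub>R z2"
  have weights: "0 \<le> u1 * \<rho>1 / \<rho>" "0 \<le> u2 * \<rho>2 / \<rho>" "u1 * \<rho>1 / \<rho> + u2 * \<rho>2 / \<rho> = 1"
    using u h1(1) h2(1) \<rho> by (auto simp: \<rho>_def add_divide_distrib[symmetric])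
  have "y \<in> open_edge i" "z \<in> open_edge j"
    unfolding y_def z_def open_edge_def
    using convexD[OF convex_open_segment _ _ weights] h1(2,3) h2(2,3) by (auto simp: open_edge_def)
  moreover have "p = (u1 *\<^sub>R x1 + u2 *\<^sub>R x2) + \<rho> *\<^sub>R y" "q = (u1 *\<^sub>R x1 + u2 *\<^sub>R x2) + \<rho> *\<^sub>R z"
  proof -
    have "(u1 *\<^sub>R x1 + u2 *\<^sub>R x2) + \<rho> *\<^sub>R y = u1 *\<^sub>R (x1 + \<rho>1 *\<^sub>R y1) + u2 *\<^sub>R (x2 + \<rho>2 *\<^sub>R y2)"
      "(u1 *\<^sub>R x1 + u2 *\<^sub>R x2) + \<rho> *\<^sub>R z = u1 *\<^sub>R (x1 + \<rho>1 *\<^sub>R z1) + u2 *\<^sub>R (x2 + \<rho>2 *\<^sub>R z2)"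
      using \<rho> by (simp_all add: y_def z_def algebra_simps)
    then show "p = (u1 *\<^sub>R x1 + u2 *\<^sub>R x2) + \<rho> *\<^sub>R y" "q = (u1 *\<^sub>R x1 + u2 *\<^sub>R x2) + \<rho> *\<^sub>R z"
      using h1(4,5) h2(4,5) u(3) by (metis scaleR_add_left scaleR_one)+
  qed
  ultimately have "has_label k v p q (u1 *\<^sub>R x1 + u2 *\<^sub>R x2) (i, j)"
    using has_label_iff[OF assms] ij \<rho> by blast
  then show "u1 *\<^sub>R x1 + u2 *\<^sub>R x2 \<in> {x. has_label k v p q x l}" using l by simp
qed

definition level :: "real^2 \<Rightarrow> nat \<Rightarrow> real" where "level w a = v a \<bullet> left_normal w"
definition slope :: "real^2 \<Rightarrow> nat \<Rightarrow> real" where "slope w i = \<sigma> * cross2 (side i) w"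

definition lower :: "(nat \<Rightarrow> real) \<Rightarrow> nat \<Rightarrow> nat \<Rightarrow> nat" where
  "lower c a b = (if c a \<le> c b then a else b)"
definition upper :: "(nat \<Rightarrow> real) \<Rightarrow> nat \<Rightarrow> nat \<Rightarrow> nat" where
  "upper c a b = (if c a \<le> c b then b else a)"

text \<open>The level ranges of the edges i and j of a label l = (i, j) intersect in the interval
  between the levels of the vertices overlap_bottom w l and overlap_top w l. Recording vertices
  rather than reals lets directions inducing the same vertex order be compared.\<close>
definition overlap_bottom :: "real^2 \<Rightarrow> nat \<times> nat \<Rightarrow> nat" where
  "overlap_bottom w l = upper (level w) (lower (level w) (fst l) (nxt (fst l))) (lower (level w) (snd l) (nxt (snd l)))"
definition overlap_top :: "real^2 \<Rightarrow> nat \<times> nat \<Rightarrow> nat" where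
  "overlap_top w l = lower (level w) (upper (level w) (fst l) (nxt (fst l))) (upper (level w) (snd l) (nxt (snd l)))"

definition chord_labels :: "real^2 \<Rightarrow> (nat \<times> nat) set" where
  "chord_labels w = {(i, j). i < k \<and> j < k \<and> 0 < slope w i \<and> slope w j < 0 \<and>
     level w (overlap_bottom w (i, j)) < level w (overlap_top w (i, j))}"

lemma slope_eq_level_diff: "slope w i = \<sigma> * (level w i - level w (nxt i))"
  by (simp add: slope_def level_def side_def cross2_def inner_vec2 algebra_simps)

lemma level_overlap_bottom: "level w (overlap_bottom w l) =
    max (min (level w (fst l)) (level w (nxt (fst l)))) (min (level w (snd l)) (level w (nxt (snd l))))"
  by (simp add: overlap_bottom_def lower_def upper_def min_def max_def)

lemma level_overlap_top: "level w (overlap_top w l) =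
    min (max (level w (fst l)) (level w (nxt (fst l)))) (max (level w (snd l)) (level w (nxt (snd l))))"
  by (simp add: overlap_top_def lower_def upper_def min_def max_def)

lemma overlap_vertices_less:
  "fst l < k \<Longrightarrow> snd l < k \<Longrightarrow> overlap_bottom w l < k \<and> overlap_top w l < k"
  using nxt_less by (simp add: overlap_bottom_def overlap_top_def lower_def upper_def)

lemma chord_labels_bottom_less_top:
  "l \<in> chord_labels w \<Longrightarrow> level w (overlap_bottom w l) < level w (overlap_top w l)"
  by (auto simp: chord_labels_def)

lemma chord_labels_subset: "chord_labels w \<subseteq> {..<k} \<times> {..<k}"
  by (auto simp: chord_labels_def)

lemma finite_chord_labels: "finite (chord_labels w)"
  using chord_labels_subset by (rule finite_subset) auto

end

section \<open>Chords parallel to a generic direction\<close>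

text \<open>Lines parallel to a generic direction w cross every edge transversally, entering Q through
  the edges i with slope w i > 0 and leaving it through those with slope w i < 0.\<close>

locale generic_direction = convex_polygon +
  fixes w :: "real^2"
  assumes nonzero: "w \<noteq> 0"
    and not_parallel: "\<forall>a<k. \<forall>b<k. a \<noteq> b \<longrightarrow> cross2 (v b - v a) w \<noteq> 0"
begin

abbreviation "n \<equiv> left_normal w"

definition chord :: "nat \<Rightarrow> nat \<Rightarrow> real^2 \<Rightarrow> real^2 \<Rightarrow> real \<Rightarrow> bool" where
  "chord i j y z m \<longleftrightarrow>
     i < k \<and> j < k \<and> y \<in> open_edge i \<and> z \<in> open_edge j \<and> 0 < m \<and> z - y = m *\<^sub>R w"

lemma slope_nonzero: "i < k \<Longrightarrow> slope w i \<noteq> 0"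
  using not_parallel nxt_less nxt_neq orientation unfolding slope_def side_def by fastforce

lemma level_nxt_neq: "i < k \<Longrightarrow> level w i \<noteq> level w (nxt i)"
  using slope_nonzero[of i] by (auto simp: slope_eq_level_diff)

lemma level_open_edge:
  "i < k \<Longrightarrow> (\<lambda>y. y \<bullet> n) ` open_edge i =
     {min (level w i) (level w (nxt i)) <..< max (level w i) (level w (nxt i))}"
  unfolding open_edge_def level_def using level_nxt_neq
  by (intro inner_image_open_segment) (simp add: level_def)

lemma height_along: "z - y = t *\<^sub>R w \<Longrightarrow> height i z = height i y + t * slope w i"
  using height_shift[of i z y] by (simp add: slope_def cross2_scaleR_right)

lemma same_level_parallel:
  assumes "y \<bullet> n = z \<bullet> n" obtains t where "z - y = t *\<^sub>R w"
proof (rule orthogonal_left_normal_imp_parallel[OF nonzero])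
  show "(z - y) \<bullet> n = 0" using assms by (simp add: inner_diff_left)
qed

lemma chord_slopes:
  assumes "chord i j y z m"
  shows "i \<noteq> j \<and> 0 < slope w i \<and> slope w j < 0 \<and> y \<bullet> n = z \<bullet> n"
proof -
  have c: "i < k" "j < k" "y \<in> open_edge i" "z \<in> open_edge j" "0 < m" "z - y = m *\<^sub>R w"
    using assms by (auto simp: chord_def)
  have hz: "height i z = m * slope w i"
    using height_along[OF c(6)] height_open_edge[OF c(3)] by simp
  have "y - z = (- m) *\<^sub>R w" using c(6) by (simp add: algebra_simps)
  from height_along[OF this] have hy: "height j y = - m * slope w j"
    using height_open_edge[OF c(4)] by simp
  have ij: "i \<noteq> j"
  proof
    assume "i = j"
    then have "height i z = 0" using height_open_edge c(4) by simp
    then show False using hz c(5) slope_nonzero[OF c(1)] by simp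
  qed
  have "0 < m * slope w i" using height_other_open_edge_pos[OF c(1,2) ij[symmetric] c(4)] hz by simp
  moreover have "0 < - m * slope w j" using height_other_open_edge_pos[OF c(2,1) ij c(3)] hy by simp
  moreover have "y \<bullet> n = z \<bullet> n" using arg_cong[OF c(6), of "\<lambda>x. x \<bullet> n"] by (simp add: inner_diff_left)
  ultimately show ?thesis using ij c(5) by (simp add: zero_less_mult_iff mult_less_0_iff)
qed

lemma same_level_slopes_opposite:
  assumes "i < k" "i' < k" "i \<noteq> i'" "y \<in> open_edge i" "y' \<in> open_edge i'" "y \<bullet> n = y' \<bullet> n"
  shows "slope w i * slope w i' < 0"
proof -
  obtain t where t: "y' - y = t *\<^sub>R w" using same_level_parallel assms(6) by blast
  then have "y - y' = (- t) *\<^sub>R w" by (simp add: algebra_simps)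
  have "0 < t * slope w i"
    using height_other_open_edge_pos[OF assms(1,2) assms(3)[symmetric] assms(5)]
      height_along[OF t] height_open_edge[OF assms(4)] by simp
  moreover have "0 < - t * slope w i'"
    using height_other_open_edge_pos[OF assms(2,1,3,4)] height_along[OF \<open>y - y' = _\<close>]
      height_open_edge[OF assms(5)] by simp
  ultimately show ?thesis by (auto simp: zero_less_mult_iff mult_less_0_iff)
qed

lemma chord_in_chord_labels:
  assumes "chord i j y z m"
  shows "(i, j) \<in> chord_labels w \<and> level w (overlap_bottom w (i, j)) < y \<bullet> n \<and>
    y \<bullet> n < level w (overlap_top w (i, j))"
proof -
  have c: "i < k" "j < k" "y \<in> open_edge i" "z \<in> open_edge j"
    using assms by (auto simp: chord_def)
  have "i \<noteq> j \<and> 0 < slope w i \<and> slope w j < 0 \<and> y \<bullet> n = z \<bullet> n" by (rule chord_slopes[OF assms])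
  moreover have "y \<bullet> n \<in> (\<lambda>y. y \<bullet> n) ` open_edge i" "z \<bullet> n \<in> (\<lambda>y. y \<bullet> n) ` open_edge j"
    using c by auto
  ultimately show ?thesis
    using c by (auto simp: chord_labels_def level_overlap_bottom level_overlap_top level_open_edge)
qed

lemma point_at_level:
  assumes "i < k" "min (level w i) (level w (nxt i)) < c" "c < max (level w i) (level w (nxt i))"
  shows "\<exists>y\<in>open_edge i. y \<bullet> n = c"
  using level_open_edge[OF assms(1)] assms(2,3) by (metis greaterThanLessThan_iff imageE)

lemma chord_labels_chord:
  assumes "(i, j) \<in> chord_labels w"
  obtains y z m where "chord i j y z m"
proof -
  have h: "i < k" "j < k" "0 < slope w i" "slope w j < 0"
    "level w (overlap_bottom w (i, j)) < level w (overlap_top w (i, j))"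
    using assms by (auto simp: chord_labels_def)
  define c where "c = (level w (overlap_bottom w (i, j)) + level w (overlap_top w (i, j))) / 2"
  have "level w (overlap_bottom w (i, j)) < c" "c < level w (overlap_top w (i, j))"
    using h(5) by (auto simp: c_def)
  then have "\<exists>y\<in>open_edge i. y \<bullet> n = c" "\<exists>z\<in>open_edge j. z \<bullet> n = c"
    using point_at_level[OF h(1), of c] point_at_level[OF h(2), of c]
    by (auto simp: level_overlap_bottom level_overlap_top)
  then obtain y z where y: "y \<in> open_edge i" "y \<bullet> n = c" and z: "z \<in> open_edge j" "z \<bullet> n = c"
    by blast
  obtain m where m: "z - y = m *\<^sub>R w" using same_level_parallel y(2) z(2) by metis
  have "j \<noteq> i" using h(3,4) by auto
  then have "0 < m * slope w i"
    using height_other_open_edge_pos[OF h(1,2) _ z(1)] height_along[OF m] height_open_edge[OF y(1)] by simp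
  then have "m > 0" using h(3) by (simp add: zero_less_mult_iff)
  then show ?thesis using that h y z m by (auto simp: chord_def)
qed

lemma chord_labels_separated:
  assumes "l \<in> chord_labels w" "l' \<in> chord_labels w" "l \<noteq> l'"
  shows "level w (overlap_top w l') \<le> level w (overlap_bottom w l) \<or>
    level w (overlap_top w l) \<le> level w (overlap_bottom w l')" (is "?below \<or> ?above")
proof (rule ccontr)
  obtain i j i' j' where l: "l = (i, j)" "l' = (i', j')" by (cases l, cases l') auto
  have h: "i < k" "j < k" "0 < slope w i" "slope w j < 0"
    "i' < k" "j' < k" "0 < slope w i'" "slope w j' < 0"
    using assms l by (auto simp: chord_labels_def)
  assume overlap: "\<not> (?below \<or> ?above)"
  define c where "c = (max (level w (overlap_bottom w l)) (level w (overlap_bottom w l')) +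
    min (level w (overlap_top w l)) (level w (overlap_top w l'))) / 2"
  have c: "level w (overlap_bottom w l) < c" "c < level w (overlap_top w l)"
    "level w (overlap_bottom w l') < c" "c < level w (overlap_top w l')"
    using overlap chord_labels_bottom_less_top[OF assms(1)] chord_labels_bottom_less_top[OF assms(2)]
    by (auto simp: c_def)
  have "\<exists>y\<in>open_edge i. y \<bullet> n = c" "\<exists>y'\<in>open_edge i'. y' \<bullet> n = c"
    "\<exists>z\<in>open_edge j. z \<bullet> n = c" "\<exists>z'\<in>open_edge j'. z' \<bullet> n = c"
    using point_at_level[OF h(1), of c] point_at_level[OF h(2), of c]
      point_at_level[OF h(5), of c] point_at_level[OF h(6), of c] c l
    by (auto simp: level_overlap_bottom level_overlap_top)
  then obtain y y' z z' where pts: "y \<in> open_edge i" "y' \<in> open_edge i'" "y \<bullet> n = y' \<bullet> n"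
    "z \<in> open_edge j" "z' \<in> open_edge j'" "z \<bullet> n = z' \<bullet> n"
    by metis
  have "i = i'"
  proof (rule ccontr)
    assume "i \<noteq> i'"
    then have "slope w i * slope w i' < 0" using same_level_slopes_opposite h(1,5) pts(1-3) by blast
    then show False using h(3,7) by (simp add: mult_less_0_iff)
  qed
  moreover have "j = j'"
  proof (rule ccontr)
    assume "j \<noteq> j'"
    then have "slope w j * slope w j' < 0" using same_level_slopes_opposite h(2,6) pts(4-6) by blast
    then show False using h(4,8) by (simp add: mult_less_0_iff)
  qed
  ultimately show False using assms(3) l by simp
qed

text \<open>A chord from an entered to a left edge is the longest segment of Q parallel to w on its
  line: moving its endpoints further out leaves the half-planes of the two edges.\<close>
lemma chord_longest:
  assumes "chord i j y z m" "a \<in> Q" "b \<in> Q" "a \<bullet> n = y \<bullet> n" "b - a = r *\<^sub>R w"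
  shows "r \<le> m"
proof -
  have c: "i < k" "j < k" "y \<in> open_edge i" "z \<in> open_edge j" "z - y = m *\<^sub>R w"
    using assms(1) by (auto simp: chord_def)
  have sl: "0 < slope w i" "slope w j < 0" "y \<bullet> n = z \<bullet> n" using chord_slopes[OF assms(1)] by auto
  obtain s where s: "a - y = s *\<^sub>R w" using same_level_parallel assms(4) by metis
  have "b \<bullet> n = a \<bullet> n" using arg_cong[OF assms(5), of "\<lambda>x. x \<bullet> n"] by (simp add: inner_diff_left)
  then obtain s' where s': "b - z = s' *\<^sub>R w" using same_level_parallel assms(4) sl(3) by metis
  have "0 \<le> s * slope w i"
    using height_along[OF s] height_open_edge[OF c(3)] height_nonneg[OF c(1) assms(2)] by simp
  then have "0 \<le> s" using sl(1) by (simp add: zero_le_mult_iff)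
  moreover have "0 \<le> s' * slope w j"
    using height_along[OF s'] height_open_edge[OF c(4)] height_nonneg[OF c(2) assms(3)] by simp
  then have "s' \<le> 0" using sl(2) by (simp add: zero_le_mult_iff)
  moreover have "r *\<^sub>R w = (m + s' - s) *\<^sub>R w"
  proof -
    have "r *\<^sub>R w = (z - y) + (b - z) - (a - y)" using assms(5) by (simp add: algebra_simps)
    then show ?thesis using c(5) s s' by (simp add: algebra_simps)
  qed
  then have "r = m + s' - s" using nonzero by simp
  ultimately show ?thesis by simp
qed

lemma segment_through_origin:
  obtains \<delta> where "\<delta> > 0" "\<delta> *\<^sub>R w \<in> Q" "(- \<delta>) *\<^sub>R w \<in> Q"
proof -
  obtain \<epsilon> where \<epsilon>: "\<epsilon> > 0" "ball 0 \<epsilon> \<subseteq> Q" by (rule ball_subset_Q)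
  define \<delta> where "\<delta> = \<epsilon> / (2 * norm w)"
  have "norm (\<delta> *\<^sub>R w) < \<epsilon>" "norm ((- \<delta>) *\<^sub>R w) < \<epsilon>" "\<delta> > 0"
    using \<epsilon> nonzero by (auto simp: \<delta>_def)
  then show ?thesis using that \<epsilon> by (auto simp: subset_iff)
qed

text \<open>Shrinking a chord towards a segment through the interior point 0 gives a longer
  segment at the intermediate level than the mere rescaled chord.\<close>
lemma chord_rescaled_shorter:
  assumes "chord i j y z m" "chord i' j' y' z' m'" "y' \<bullet> n = t * (y \<bullet> n)" "0 \<le> t" "t < 1"
  shows "t * m < m'"
proof -
  obtain \<delta> where \<delta>: "\<delta> > 0" "\<delta> *\<^sub>R w \<in> Q" "(- \<delta>) *\<^sub>R w \<in> Q" by (rule segment_through_origin)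
  have yz: "y \<in> Q" "z \<in> Q" "z - y = m *\<^sub>R w"
    using assms(1) open_edge_subset_Q by (auto simp: chord_def)
  define a where "a = t *\<^sub>R y + (1 - t) *\<^sub>R ((- \<delta>) *\<^sub>R w)"
  define b where "b = t *\<^sub>R z + (1 - t) *\<^sub>R (\<delta> *\<^sub>R w)"
  have "a \<in> Q" unfolding a_def using convexD[OF convex_Q yz(1) \<delta>(3)] assms(4,5) by simp
  moreover have "b \<in> Q" unfolding b_def using convexD[OF convex_Q yz(2) \<delta>(2)] assms(4,5) by simp
  moreover have "a \<bullet> n = y' \<bullet> n" using assms(3) by (simp add: a_def inner_add_left inner_diff_left)
  moreover have "b - a = (t * m + 2 * (1 - t) * \<delta>) *\<^sub>R w"
    using yz(3) by (simp add: a_def b_def vec2_eq_iff algebra_simps)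
  ultimately have "t * m + 2 * (1 - t) * \<delta> \<le> m'" by (rule chord_longest[OF assms(2)])
  moreover have "0 < 2 * (1 - t) * \<delta>" using assms(5) \<delta>(1) by simp
  ultimately show ?thesis by linarith
qed

lemma chord_level_length_mono:
  assumes "chord i j y z m" "chord i' j' y' z' m'" "y' \<bullet> n < y \<bullet> n"
  shows "(y' \<bullet> n) * m < (y \<bullet> n) * m'"
proof -
  have m: "0 < m" "0 < m'" using assms(1,2) by (auto simp: chord_def)
  consider "0 \<le> y' \<bullet> n" | "y \<bullet> n \<le> 0" | "y' \<bullet> n < 0" "0 < y \<bullet> n" by linarith
  then show ?thesis
  proof cases
    case 1
    have c: "0 < y \<bullet> n" using 1 assms(3) by linarith
    define t where "t = (y' \<bullet> n) / (y \<bullet> n)"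
    have "y' \<bullet> n = t * (y \<bullet> n)" "0 \<le> t" "t < 1" using c 1 assms(3) by (auto simp: t_def field_simps)
    then have "t * m < m'" by (rule chord_rescaled_shorter[OF assms(1,2)])
    then have "(y \<bullet> n) * (t * m) < (y \<bullet> n) * m'" using c by simp
    then show ?thesis using c by (simp add: t_def)
  next
    case 2
    have c': "y' \<bullet> n < 0" using 2 assms(3) by linarith
    define t where "t = (y \<bullet> n) / (y' \<bullet> n)"
    have "y \<bullet> n = t * (y' \<bullet> n)" "0 \<le> t" "t < 1" using c' 2 assms(3) by (auto simp: t_def field_simps)
    then have "t * m' < m" by (rule chord_rescaled_shorter[OF assms(2,1)])
    then have "(y' \<bullet> n) * m < (y' \<bullet> n) * (t * m')" using c' by (simp add: mult_less_cancel_left_neg)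
    then show ?thesis using c' by (simp add: t_def)
  next
    case 3
    then have "(y' \<bullet> n) * m < 0" "0 < (y \<bullet> n) * m'" using m by (simp_all add: mult_neg_pos)
    then show ?thesis by linarith
  qed
qed

lemma has_label_chord:
  assumes "q - p = w" "has_label k v p q x (i, j)"
  obtains \<rho> y z where "\<rho> > 0" "chord i j y z (1 / \<rho>)" "p = x + \<rho> *\<^sub>R y"
proof -
  have "p \<noteq> q" using assms(1) nonzero by auto
  then obtain \<rho> y z where h: "i < k" "j < k" "\<rho> > 0" "y \<in> open_edge i" "z \<in> open_edge j"
    "p = x + \<rho> *\<^sub>R y" "q = x + \<rho> *\<^sub>R z"
    using assms(2) has_label_iff by blast
  have "w = \<rho> *\<^sub>R (z - y)" using assms(1) h(6,7) by (simp add: algebra_simps)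
  then have "z - y = (1 / \<rho>) *\<^sub>R w" using h(3) by simp
  then show ?thesis using that h by (simp add: chord_def)
qed

lemma ex_has_label_iff:
  assumes "q - p = w"
  shows "(\<exists>x. has_label k v p q x l) \<longleftrightarrow> l \<in> chord_labels w"
proof -
  obtain i j where l: "l = (i, j)" by (cases l)
  have pq: "p \<noteq> q" using assms nonzero by auto
  show ?thesis
  proof
    assume "\<exists>x. has_label k v p q x l"
    then show "l \<in> chord_labels w"
      using has_label_chord[OF assms] chord_in_chord_labels l by metis
  next
    assume "l \<in> chord_labels w"
    then obtain y z m where c: "chord i j y z m" using chord_labels_chord l by blast
    then have h: "i < k" "j < k" "y \<in> open_edge i" "z \<in> open_edge j" "m > 0" "z - y = m *\<^sub>R w"
      by (auto simp: chord_def)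
    define x where "x = p - (1 / m) *\<^sub>R y"
    have "q = x + (1 / m) *\<^sub>R z"
      using assms h(5,6) by (simp add: x_def algebra_simps)
    moreover have "p = x + (1 / m) *\<^sub>R y" by (simp add: x_def)
    moreover have "1 / m > 0" using h(5) by simp
    ultimately have "has_label k v p q x (i, j)"
      using has_label_iff[OF pq] h(1-4) by blast
    then show "\<exists>x. has_label k v p q x l" using l by blast
  qed
qed

lemma edgelet_iff:
  assumes "q - p = w"
  shows "edgelet k v p q E l \<longleftrightarrow> l \<in> chord_labels w \<and> E = {x. has_label k v p q x l}"
proof -
  have "p \<noteq> q" using assms nonzero by auto
  then show ?thesis
    using ex_has_label_iff[OF assms, of l] convex_label_set[of p q l]
    by (auto simp: edgelet_def)
qed

text \<open>The center x of a placement with p = x + \<rho> y lies at level p \<bullet> n - (y \<bullet> n) / m, where m = 1/\<rho>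
  is the length of the chord through y, so chord_level_length_mono orders the label sets.\<close>
lemma label_sets_ordered:
  assumes "q - p = w" "has_label k v p q x l" "has_label k v p q x' l'"
    "level w (overlap_top w l') \<le> level w (overlap_bottom w l)"
  shows "x \<bullet> n < x' \<bullet> n"
proof -
  obtain i j i' j' where l: "l = (i, j)" "l' = (i', j')" by (cases l, cases l')
  obtain \<rho> y z where h: "\<rho> > 0" "chord i j y z (1 / \<rho>)" "p = x + \<rho> *\<^sub>R y"
    using has_label_chord[OF assms(1)] assms(2) l by metis
  obtain \<rho>' y' z' where h': "\<rho>' > 0" "chord i' j' y' z' (1 / \<rho>')" "p = x' + \<rho>' *\<^sub>R y'"
    using has_label_chord[OF assms(1)] assms(3) l by metis
  have "y' \<bullet> n < y \<bullet> n"
    using chord_in_chord_labels[OF h(2)] chord_in_chord_labels[OF h'(2)] assms(4) unfolding l by linarith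
  then have "(y' \<bullet> n) * (1 / \<rho>) < (y \<bullet> n) * (1 / \<rho>')"
    using chord_level_length_mono[OF h(2) h'(2)] by simp
  then have "\<rho>' * (y' \<bullet> n) < \<rho> * (y \<bullet> n)"
    using h(1) h'(1) by (simp add: field_simps)
  moreover have "p \<bullet> n = x \<bullet> n + \<rho> * (y \<bullet> n)" "p \<bullet> n = x' \<bullet> n + \<rho>' * (y' \<bullet> n)"
    by (subst h(3), simp add: inner_add_left) (subst h'(3), simp add: inner_add_left)
  ultimately show ?thesis by linarith
qed

lemma inj_on_level_overlap_bottom: "inj_on (\<lambda>l. level w (overlap_bottom w l)) (chord_labels w)"
proof (rule inj_onI, rule ccontr)
  fix l l' assume l: "l \<in> chord_labels w" "l' \<in> chord_labels w"
    and eq: "level w (overlap_bottom w l) = level w (overlap_bottom w l')" and "l \<noteq> l'"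
  from chord_labels_separated[OF l \<open>l \<noteq> l'\<close>] show False
    using eq chord_labels_bottom_less_top[OF l(1)] chord_labels_bottom_less_top[OF l(2)] by linarith
qed

lemma chord_labels_bottom_less:
  assumes "l \<in> chord_labels w" "l' \<in> chord_labels w"
    "level w (overlap_bottom w l') < level w (overlap_bottom w l)"
  shows "level w (overlap_top w l') \<le> level w (overlap_bottom w l)"
proof -
  have "l \<noteq> l'" using assms(3) by auto
  then have "level w (overlap_top w l') \<le> level w (overlap_bottom w l) \<or>
      level w (overlap_top w l) \<le> level w (overlap_bottom w l')"
    using chord_labels_separated assms(1,2) by blast
  then show ?thesis using assms(3) chord_labels_bottom_less_top[OF assms(1)] by linarith
qed

lemma edgelet_label_sequence_if_sorted:
  assumes "q - p = w" "set L = chord_labels w"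
    and "sorted_wrt (\<lambda>l l'. level w (overlap_bottom w l') < level w (overlap_bottom w l)) L"
  shows "edgelet_label_sequence k v p q L"
proof -
  define Es where "Es = map (\<lambda>l. ({x. has_label k v p q x l}, l)) L"
  have "set Es = {(E, l). edgelet k v p q E l}"
    unfolding Es_def using edgelet_iff[OF assms(1)] assms(2) by auto
  moreover have "sorted_wrt (\<lambda>a b. \<forall>x\<in>fst a. \<forall>y\<in>fst b. x \<bullet> n < y \<bullet> n) Es"
    unfolding Es_def sorted_wrt_map
  proof (rule sorted_wrt_mono_rel[OF _ assms(3)], clarsimp)
    fix l l' x x' assume "l \<in> set L" "l' \<in> set L"
      "level w (overlap_bottom w l') < level w (overlap_bottom w l)"
      "has_label k v p q x l" "has_label k v p q x' l'"
    moreover from this have "level w (overlap_top w l') \<le> level w (overlap_bottom w l)"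
      using chord_labels_bottom_less assms(2) by blast
    ultimately show "x \<bullet> n < x' \<bullet> n" using label_sets_ordered[OF assms(1)] by blast
  qed
  moreover have "L = map snd Es" by (simp add: Es_def comp_def)
  ultimately show ?thesis
    unfolding edgelet_label_sequence_def assms(1) by blast
qed

end

section \<open>Directions inducing the same vertex order\<close>

lemma sorted_wrt_key_list:
  fixes f :: "'a \<Rightarrow> 'b::linorder"
  assumes "finite A" "inj_on f A"
  obtains xs where "set xs = A" "sorted_wrt (\<lambda>a b. f a < f b) xs"
proof -
  interpret folding_insort_key "(\<le>)" "(<)" A f by unfold_locales (rule assms(2))
  let ?xs = "linorder.sorted_key_list_of_set (\<le>) f A"
  have "sorted_wrt (<) (map f ?xs)"
    unfolding strict_sorted_iff using sorted_key_list_of_set[OF order_refl] by simp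
  then show ?thesis
    using that set_sorted_key_list_of_set[OF order_refl assms(1)] by (simp add: sorted_wrt_map)
qed

lemma connected_nonzero_sign_eq:
  fixes f :: "'a::topological_space \<Rightarrow> real"
  assumes "connected C" "continuous_on C f" "\<forall>x\<in>C. f x \<noteq> 0" "x \<in> C" "y \<in> C"
  shows "f x < 0 \<longleftrightarrow> f y < 0"
proof -
  have "connected (f ` C)" using connected_continuous_image assms(1,2) by blast
  then have "\<not> (f a < 0 \<and> 0 < f b)" if "a \<in> C" "b \<in> C" for a b
    using connectedD_interval[of "f ` C" "f a" "f b" 0] assms(3) that by force
  then show ?thesis using assms(3-5) by (meson linorder_neqE_linordered_idom)
qed

context convex_polygon
begin

definition generic :: "real^2 \<Rightarrow> bool" where
  "generic w \<longleftrightarrow> w \<noteq> 0 \<and> (\<forall>a<k. \<forall>b<k. a \<noteq> b \<longrightarrow> cross2 (v b - v a) w \<noteq> 0)"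

definition same_vertex_order :: "real^2 \<Rightarrow> real^2 \<Rightarrow> bool" where
  "same_vertex_order w w' \<longleftrightarrow> (\<forall>a<k. \<forall>b<k. level w a < level w b \<longleftrightarrow> level w' a < level w' b)"

lemma generic_direction_if_generic: "generic w \<Longrightarrow> generic_direction k v \<sigma> w"
  unfolding generic_direction_def generic_direction_axioms_def generic_def
  using convex_polygon_axioms by auto

lemma same_vertex_order_overlap:
  assumes "same_vertex_order w w'" "fst l < k" "snd l < k"
  shows "overlap_bottom w l = overlap_bottom w' l \<and> overlap_top w l = overlap_top w' l"
proof -
  have "level w a \<le> level w b \<longleftrightarrow> level w' a \<le> level w' b" if "a < k" "b < k" for a b
    using assms(1) that by (auto simp: same_vertex_order_def not_less[symmetric])
  moreover have "lower c a b < k" "upper c a b < k" if "a < k" "b < k" for c a b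
    using that by (simp_all add: lower_def upper_def)
  ultimately show ?thesis
    using assms(2,3) nxt_less by (simp add: overlap_bottom_def overlap_top_def lower_def upper_def)
qed

lemma same_vertex_order_chord_labels:
  assumes "same_vertex_order w w'"
  shows "chord_labels w = chord_labels w'"
proof -
  have "(0 < slope w i \<longleftrightarrow> 0 < slope w' i) \<and> (slope w i < 0 \<longleftrightarrow> slope w' i < 0)" if "i < k" for i
  proof -
    have "level w (nxt i) < level w i \<longleftrightarrow> level w' (nxt i) < level w' i"
      "level w i < level w (nxt i) \<longleftrightarrow> level w' i < level w' (nxt i)"
      using assms that nxt_less[OF that] unfolding same_vertex_order_def by blast+
    then show ?thesis using orientation by (auto simp: slope_eq_level_diff)
  qed
  moreover have "level w (overlap_bottom w l) < level w (overlap_top w l) \<longleftrightarrow>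
      level w' (overlap_bottom w' l) < level w' (overlap_top w' l)" if "fst l < k" "snd l < k" for l
  proof -
    have "overlap_bottom w l < k" "overlap_top w l < k" using overlap_vertices_less[OF that] by auto
    then show ?thesis
      using assms same_vertex_order_overlap[OF assms that] unfolding same_vertex_order_def by simp
  qed
  ultimately have "(i, j) \<in> chord_labels w \<longleftrightarrow> (i, j) \<in> chord_labels w'" for i j
    unfolding chord_labels_def by (smt (verit) case_prod_conv fst_conv mem_Collect_eq snd_conv)
  then show ?thesis by (simp add: set_eq_iff split_paired_All)
qed

lemma same_vertex_order_less:
  "same_vertex_order w w' \<Longrightarrow> a < k \<Longrightarrow> b < k \<Longrightarrow> level w a < level w b \<longleftrightarrow> level w' a < level w' b"
  by (simp add: same_vertex_order_def)

lemma same_vertex_order_sorted: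
  assumes "same_vertex_order w w'" "set L = chord_labels w"
    "sorted_wrt (\<lambda>l l'. level w (overlap_bottom w l') < level w (overlap_bottom w l)) L"
  shows "sorted_wrt (\<lambda>l l'. level w' (overlap_bottom w' l') < level w' (overlap_bottom w' l)) L"
proof (rule sorted_wrt_mono_rel[OF _ assms(3)])
  fix l l' assume "l \<in> set L" "l' \<in> set L"
    and less: "level w (overlap_bottom w l') < level w (overlap_bottom w l)"
  then have "l \<in> {..<k} \<times> {..<k}" "l' \<in> {..<k} \<times> {..<k}"
    using assms(2) chord_labels_subset by blast+
  then have "fst l < k" "snd l < k" "fst l' < k" "snd l' < k" by auto
  then have "overlap_bottom w l = overlap_bottom w' l" "overlap_bottom w l' = overlap_bottom w' l'"
    "overlap_bottom w l < k" "overlap_bottom w l' < k"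
    using same_vertex_order_overlap[OF assms(1)] overlap_vertices_less by auto
  then show "level w' (overlap_bottom w' l') < level w' (overlap_bottom w' l)"
    using less same_vertex_order_less[OF assms(1), of "overlap_bottom w l'" "overlap_bottom w l"] by simp
qed

lemma edgelet_label_sequence_constant:
  assumes "generic u"
  obtains L where "\<And>p q. generic (q - p) \<Longrightarrow> same_vertex_order (q - p) u \<Longrightarrow>
      edgelet_label_sequence k v p q L"
proof -
  interpret U: generic_direction k v \<sigma> u using assms by (rule generic_direction_if_generic)
  have "inj_on (\<lambda>l. - level u (overlap_bottom u l)) (chord_labels u)"
    using U.inj_on_level_overlap_bottom by (simp add: inj_on_def)
  then obtain L where L: "set L = chord_labels u"
    "sorted_wrt (\<lambda>l l'. - level u (overlap_bottom u l) < - level u (overlap_bottom u l')) L"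
    by (rule sorted_wrt_key_list[OF finite_chord_labels])
  show ?thesis
  proof (rule that)
    fix p q assume "generic (q - p)" and order: "same_vertex_order (q - p) u"
    interpret W: generic_direction k v \<sigma> "q - p" by (rule generic_direction_if_generic) fact
    have "same_vertex_order u (q - p)" using order by (auto simp: same_vertex_order_def)
    then have "set L = chord_labels (q - p)"
      "sorted_wrt (\<lambda>l l'. level (q - p) (overlap_bottom (q - p) l') < level (q - p) (overlap_bottom (q - p) l)) L"
      using L same_vertex_order_sorted same_vertex_order_chord_labels[OF order] by simp_all
    then show "edgelet_label_sequence k v p q L"
      by (rule W.edgelet_label_sequence_if_sorted[OF refl])
  qed
qed

lemma generic_if_not_direction:
  assumes "w \<noteq> 0" "sgn w \<notin> directions k v"
  shows "generic w"
  unfolding generic_def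
proof (intro conjI allI impI assms(1))
  fix a b assume ab: "a < k" "b < k" "a \<noteq> b"
  show "cross2 (v b - v a) w \<noteq> 0"
  proof
    assume "cross2 (v b - v a) w = 0"
    then have "w \<bullet> left_normal (v b - v a) = 0"
      by (simp add: cross2_eq_inner_left_normal inner_commute)
    moreover have "v b - v a \<noteq> 0" using vertex_inj ab by auto
    ultimately obtain s where s: "w = s *\<^sub>R (v b - v a)"
      using orthogonal_left_normal_imp_parallel by blast
    have "sgn (v b - v a) \<in> directions k v" "sgn (v a - v b) \<in> directions k v"
      using ab unfolding directions_def by blast+
    moreover have "sgn w = sgn (v b - v a) \<or> sgn w = sgn (v a - v b)"
      using assms(1) unfolding s sgn_scaleR
      by (cases "s > 0") (auto simp: sgn_minus[symmetric] linorder_neq_iff)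
    ultimately show False using assms(2) by auto
  qed
qed

lemma generic_if_unit_not_direction:
  assumes "u \<in> sphere 0 1 - directions k v" shows "generic u"
proof -
  have "norm u = 1" using assms by simp
  then have "u \<noteq> 0" "sgn u = u" by (auto simp: sgn_div_norm)
  then show ?thesis using generic_if_not_direction assms by simp
qed

lemma same_vertex_order_scaleR: "r > 0 \<Longrightarrow> same_vertex_order (r *\<^sub>R w) w"
proof -
  assume "r > 0"
  moreover have "level (r *\<^sub>R w) a = r * level w a" for a
    by (simp add: level_def inner_vec2 algebra_simps)
  ultimately show ?thesis by (simp add: same_vertex_order_def)
qed

lemma same_vertex_order_if_connected:
  assumes "connected C" "\<forall>d\<in>C. generic d" "d \<in> C" "d' \<in> C"
  shows "same_vertex_order d d'"
  unfolding same_vertex_order_def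
proof (intro allI impI)
  fix a b assume ab: "a < k" "b < k"
  have diff: "level d b - level d a = - (left_normal (v b - v a) \<bullet> d)" for d
    by (simp add: level_def inner_vec2 algebra_simps)
  show "level d a < level d b \<longleftrightarrow> level d' a < level d' b"
  proof (cases "a = b")
    case False
    have "continuous_on C (\<lambda>x. left_normal (v b - v a) \<bullet> x)" by (intro continuous_intros)
    moreover have "\<forall>x\<in>C. left_normal (v b - v a) \<bullet> x \<noteq> 0"
      using assms(2) ab False by (auto simp: generic_def cross2_eq_inner_left_normal)
    ultimately show ?thesis
      using connected_nonzero_sign_eq[OF assms(1) _ _ assms(3,4)] diff[of d] diff[of d']
      by (smt (verit))
  qed simp
qed

lemma arc_same_vertex_order:
  assumes u: "u \<in> sphere 0 1 - directions k v" and "w \<noteq> 0"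
    and arc: "sgn w \<in> connected_component_set (sphere 0 1 - directions k v) u"
  shows "generic w \<and> same_vertex_order w u"
proof -
  let ?C = "connected_component_set (sphere 0 1 - directions k v) u"
  have C: "?C \<subseteq> sphere 0 1 - directions k v" by (rule connected_component_subset)
  then have "\<forall>d\<in>?C. generic d" using generic_if_unit_not_direction by blast
  then have "same_vertex_order (sgn w) u"
    using same_vertex_order_if_connected[of ?C] arc u by (simp add: connected_component_refl)
  moreover have "same_vertex_order w (sgn w)"
    using same_vertex_order_scaleR[of "norm w" "sgn w"] assms(2) by (simp add: sgn_div_norm)
  moreover have "generic w" using generic_if_not_direction assms(2) arc C by blast
  ultimately show ?thesis by (simp add: same_vertex_order_def)
qed

end

lemma convex_kgon_orientation:
  assumes "convex_kgon k v" "0 \<in> interior (polygon k v)"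
  obtains \<sigma> where "convex_polygon k v \<sigma>"
proof (cases "\<forall>i<k. \<forall>j<k. j \<noteq> i \<and> j \<noteq> Suc i mod k \<longrightarrow>
    0 < cross2 (v (Suc i mod k) - v i) (v j - v i)")
  case True
  then have "convex_polygon k v 1" using assms unfolding convex_polygon_def convex_kgon_def by auto
  then show ?thesis by (rule that)
next
  case False
  then have "convex_polygon k v (-1)" using assms unfolding convex_polygon_def convex_kgon_def by auto
  then show ?thesis by (rule that)
qed

theorem corollary3:
  fixes k :: nat and v :: "nat \<Rightarrow> real^2"
  assumes "convex_kgon k v"
    and "0 \<in> interior (polygon k v)"
  shows "\<forall>u \<in> sphere 0 1 - directions k v. \<exists>L. \<forall>p q.
           p \<noteq> q \<and> sgn (q - p) \<in> connected_component_set (sphere 0 1 - directions k v) u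
           \<longrightarrow> edgelet_label_sequence k v p q L"
proof
  obtain \<sigma> where "convex_polygon k v \<sigma>" using assms by (rule convex_kgon_orientation)
  then interpret convex_polygon k v \<sigma> .
  fix u assume u: "u \<in> sphere 0 1 - directions k v"
  obtain L where L: "\<And>p q. generic (q - p) \<Longrightarrow> same_vertex_order (q - p) u \<Longrightarrow>
      edgelet_label_sequence k v p q L"
    using edgelet_label_sequence_constant generic_if_unit_not_direction[OF u] by blast
  show "\<exists>L. \<forall>p q. p \<noteq> q \<and> sgn (q - p) \<in> connected_component_set (sphere 0 1 - directions k v) u
           \<longrightarrow> edgelet_label_sequence k v p q L"
  proof (intro exI allI impI)
    fix p q
    assume "p \<noteq> q \<and> sgn (q - p) \<in> connected_component_set (sphere 0 1 - directions k v) u"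
    then have "generic (q - p) \<and> same_vertex_order (q - p) u"
      by (intro arc_same_vertex_order[OF u]) auto
    then show "edgelet_label_sequence k v p q L" using L by blast
  qed
qed

end
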